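(* In the construction described in the context, for each $k\in\mathbb{N}$ the map $\pi_k:\mathcal P_\infty\to[0,1]$ (the $k$-th coordinate) is continuous and extends continuously to $P_\infty$. Moreover, for every $\bar x\in P_\infty\setminus i_k(P_k)$ one has $\pi_k(\bar x)\in A_k:=\pi_k(Q_k)$.
   Context: Construction. Let $(e_n)$ be the canonical basis of $\ell^1(\mathbb{N})$; $\alpha(t)=t$ on $[0,\frac12]$, $\alpha(t)=1-t$ on $[\frac12,1]$; $S_n=\{te_1+\alpha(t)e_{n+1}:t\in[0,1]\}$; $x_n=(\frac12-\frac1{2^n})e_1$, $x_\infty=\frac12e_1$; $Y=\bigcup_{n\ge1}(2^{-(n+1)}S_n+x_n)\cup\{x_\infty\}$ with the $\ell^1$ metric $\theta$. $Y$ is the image of an arc-length parametrized injective curve $\gamma:[0,1]\to Y$ with $\gamma(0)=0$, $\gamma(1)=x_\infty$. For $r>0$ let $\theta_r(s,t)=r\,\theta(\gamma(s/r),\gamma(t/r))$ on $[0,r]$. Set $P_1=[0,1]$, $\rho_1=\theta_1$, $L_1=\{1\}$. Given $(P_k,\rho_k)$ with $P_k\subset[0,1]^k$ and $L_k\subset P_k$, let $\pi_k$ denote the $k$-th coordinate, choose a countable dense subset $Q_k=\{q_n:n\in\mathbb{N}\}$ (distinct $q_n$) of $P_k\setminus L_k$ with $\pi_k$ injective on $Q_k$ and $0\notin\pi_k(Q_k)$, set $r_n=2^{-(n+k)}$, $d_n=\theta_{r_n}$, and let $P_{k+1}=\{(x,0):x\in P_k\setminus Q_k\}\cup\{(q_n,y):n\in\mathbb{N},y\in[0,r_n]\}\subset[0,1]^{k+1}$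 with metric $\rho_{k+1}((x_1,y_1),(x_2,y_2))$ equal to $d_n(y_1,y_2)$ if $x_1=x_2=q_n$; $d_n(y_1,0)+\rho_k(x_1,x_2)+d_m(0,y_2)$ if $x_1=q_n,x_2=q_m$, $n\ne m$; $d_n(y_1,0)+\rho_k(x_1,x_2)$ if $x_1=q_n$, $x_2\notin Q_k$ (and symmetrically); $\rho_k(x_1,x_2)$ if $x_1,x_2\notin Q_k$. Let $L_{k+1}=(L_k\times\{0\})\cup\{(q_n,r_n):n\in\mathbb{N}\}$. Let $i_k:P_k\to[0,1]^{\mathbb{N}}$, $i_k(x)=(x_1,\dots,x_k,0,0,\dots)$; $\mathcal P_\infty=\bigcup_k i_k(P_k)$ with the metric $\rho_\infty(x,y)=\rho_k(i_k^{-1}x,i_k^{-1}y)$ for $x,y\in i_k(P_k)$ (well defined since the natural embeddings $P_k\to P_{k'}$ are isometries); $(P_\infty,\rho_\infty)$ is the completion of $(\mathcal P_\infty,\rho_\infty)$, and $i_k$ is regarded as a map into $P_\infty$. On $\mathcal P_\infty\subset[0,1]^{\mathbb{N}}$, $\pi_k$ is the $k$-th coordinate. *)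

theory Defs
  imports "HOL-Analysis.Analysis"
begin

text \<open>The paper's coordinate k (k >= 1) is index k-1; the paper's basis vector
  e_m is the indicator of index m-1. The paper's level k (k >= 1) is index j = k-1, and
  the paper's n (n >= 1) in Q_k = {q_n} is index n-1 here. P_k is stored already embedded
  via i_k (coordinates >= k are zero).\<close>

definition alpha :: "real \<Rightarrow> real" where
  "alpha t = (if t \<le> 1/2 then t else 1 - t)"

text \<open>l^1 distance (used only on finitely supported points).\<close>
definition theta :: "(nat \<Rightarrow> real) \<Rightarrow> (nat \<Rightarrow> real) \<Rightarrow> real" where
  "theta y z = (\<Sum>i. \<bar>y i - z i\<bar>)"

definition Yset :: "(nat \<Rightarrow> real) set" where
  "Yset = (\<Union>n\<in>{1..}. {(\<lambda>i. if i = 0 then (1/2)^(n+1) * t + (1/2 - (1/2)^n)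
                          else if i = n then (1/2)^(n+1) * alpha t else 0) | t. 0 \<le> t \<and> t \<le> 1})
          \<union> {(\<lambda>i. if i = 0 then 1/2 else 0)}"

text \<open>The arc-length parametrization gamma of Y, written out explicitly: for
  s in [1 - 2^-(n-1), 1 - 2^-n) with u = s - (1 - 2^-(n-1)), gamma traverses the n-th
  piece 2^-(n+1) S_n + x_n at parameter t = 2^n u.\<close>
definition gamma :: "real \<Rightarrow> (nat \<Rightarrow> real)" where
  "gamma s = (if s \<ge> 1 then (\<lambda>i. if i = 0 then 1/2 else 0)
     else (let n = nat \<lfloor>- log 2 (1 - s)\<rfloor> + 1;
               u = s - (1 - (1/2)^(n-1))
           in (\<lambda>i. if i = 0 then (1/2 - (1/2)^n) + u / 2
                   else if i = n then (1/2)^(n+1) * alpha (2^n * u) else 0)))"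

definition theta_r :: "real \<Rightarrow> real \<Rightarrow> real \<Rightarrow> real" where
  "theta_r r s t = r * theta (gamma (s / r)) (gamma (t / r))"

text \<open>r_n = 2^-(n+k) with paper n = n+1, paper k = j+1.\<close>
definition rr :: "nat \<Rightarrow> nat \<Rightarrow> real" where
  "rr j n = (1/2) ^ (n + j + 2)"

definition dd :: "nat \<Rightarrow> nat \<Rightarrow> real \<Rightarrow> real \<Rightarrow> real" where
  "dd j n = theta_r (rr j n)"

text \<open>q j n is the paper's q_{n+1} in Q_{j+1} (embedded point).\<close>
definition idx :: "(nat \<Rightarrow> nat \<Rightarrow> (nat \<Rightarrow> real)) \<Rightarrow> nat \<Rightarrow> (nat \<Rightarrow> real) \<Rightarrow> nat" where
  "idx q j x = (THE n. q j n = x)"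

primrec Pk :: "(nat \<Rightarrow> nat \<Rightarrow> (nat \<Rightarrow> real)) \<Rightarrow> nat \<Rightarrow> (nat \<Rightarrow> real) set" where
  "Pk q 0 = {p. 0 \<le> p 0 \<and> p 0 \<le> 1 \<and> (\<forall>i>0. p i = 0)}"
| "Pk q (Suc j) = {p. p \<in> Pk q j \<and> p \<notin> range (q j)}
      \<union> {(q j n)(Suc j := y) | n y. 0 \<le> y \<and> y \<le> rr j n}"

primrec Lk :: "(nat \<Rightarrow> nat \<Rightarrow> (nat \<Rightarrow> real)) \<Rightarrow> nat \<Rightarrow> (nat \<Rightarrow> real) set" where
  "Lk q 0 = {(\<lambda>i. if i = 0 then 1 else 0)}"
| "Lk q (Suc j) = Lk q j \<union> {(q j n)(Suc j := rr j n) | n. True}"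

primrec rho :: "(nat \<Rightarrow> nat \<Rightarrow> (nat \<Rightarrow> real)) \<Rightarrow> nat \<Rightarrow> (nat \<Rightarrow> real) \<Rightarrow> (nat \<Rightarrow> real) \<Rightarrow> real" where
  "rho q 0 a b = theta_r 1 (a 0) (b 0)"
| "rho q (Suc j) a b =
     (let xa = a(Suc j := 0); ya = a (Suc j); xb = b(Suc j := 0); yb = b (Suc j);
          Q = range (q j) in
      if xa \<in> Q \<and> xb \<in> Q then
        (if xa = xb then dd j (idx q j xa) ya yb
         else dd j (idx q j xa) ya 0 + rho q j xa xb + dd j (idx q j xb) 0 yb)
      else if xa \<in> Q then dd j (idx q j xa) ya 0 + rho q j xa xb
      else if xb \<in> Q then rho q j xa xb + dd j (idx q j xb) 0 yb
      else rho q j xa xb)"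

definition valid_choice :: "(nat \<Rightarrow> nat \<Rightarrow> (nat \<Rightarrow> real)) \<Rightarrow> bool" where
  "valid_choice q \<longleftrightarrow> (\<forall>j.
     range (q j) \<subseteq> Pk q j - Lk q j \<and>
     inj (q j) \<and>
     (\<forall>x \<in> Pk q j - Lk q j. \<forall>e>0. \<exists>n. rho q j x (q j n) < e) \<and>
     inj_on (\<lambda>x. x j) (range (q j)) \<and>
     (\<forall>n. q j n j \<noteq> 0))"

definition Pinf :: "(nat \<Rightarrow> nat \<Rightarrow> (nat \<Rightarrow> real)) \<Rightarrow> (nat \<Rightarrow> real) set" where
  "Pinf q = (\<Union>j. Pk q j)"

definition rhoinf :: "(nat \<Rightarrow> nat \<Rightarrow> (nat \<Rightarrow> real)) \<Rightarrow> (nat \<Rightarrow> real) \<Rightarrow> (nat \<Rightarrow> real) \<Rightarrow> real" where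
  "rhoinf q x y = rho q (LEAST j. x \<in> Pk q j \<and> y \<in> Pk q j) x y"

end

theory Submission
  imports Defs
begin

text \<open>The arcs theta_r are bi-Lipschitz to the parameter distance, with constants 1/2
  and 2, and projecting a point onto a lower level of the tree does not increase distances;
  hence coordinate j is 2-Lipschitz on P_inf and extends uniformly continuously to the
  completion. Every level is complete, so its image is closed. Near a limit point z off
  level j, two approximating points have the same projection onto level j, for otherwise
  the geodesic between them would pass through level j, which is far from z. So the
  approximating points eventually share coordinate j, and a point off level j has the
  coordinate j of some q j n.\<close>

section \<open>The arc gamma\<close>

definition piece_index :: "real \<Rightarrow> nat" where
  "piece_index s = nat \<lfloor>- log 2 (1 - s)\<rfloor> + 1"

lemma piece_index_ge_1: "piece_index s \<ge> 1"
  by (simp add: piece_index_def)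

lemma gamma_below_1:
  "s < 1 \<Longrightarrow> gamma s = (\<lambda>i.
     if i = 0 then (1/2 - (1/2)^piece_index s) + (s - (1 - (1/2)^(piece_index s - 1))) / 2
     else if i = piece_index s
       then (1/2)^(piece_index s + 1) * alpha (2^piece_index s * (s - (1 - (1/2)^(piece_index s - 1))))
     else 0)"
  unfolding gamma_def piece_index_def Let_def by simp

lemma gamma_above_1: "s \<ge> 1 \<Longrightarrow> gamma s = (\<lambda>i. if i = 0 then 1/2 else 0)"
  by (simp add: gamma_def)

lemma half_power_pred: "n \<ge> 1 \<Longrightarrow> ((1::real)/2)^(n - 1) = 2 * (1/2)^n"
  by (cases n) auto

lemma gamma_coord_0: "s \<le> 1 \<Longrightarrow> gamma s 0 = s / 2"
proof (cases "s < 1")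
  case True
  have "((1::real)/2)^(piece_index s - 1) = 2 * (1/2)^piece_index s"
    using piece_index_ge_1 half_power_pred by blast
  with True show ?thesis by (simp add: gamma_below_1 field_simps)
qed (simp add: gamma_above_1)

lemma gamma_coord_other: "i \<noteq> 0 \<Longrightarrow> i \<noteq> piece_index s \<Longrightarrow> gamma s i = 0"
  by (cases "s < 1") (auto simp: gamma_below_1 gamma_above_1)

lemma piece_index_mono: "s \<le> t \<Longrightarrow> t < 1 \<Longrightarrow> piece_index s \<le> piece_index t"
proof -
  assume "s \<le> t" "t < 1"
  then have "\<lfloor>- log 2 (1 - s)\<rfloor> \<le> \<lfloor>- log 2 (1 - t)\<rfloor>"
    by (intro floor_mono) simp
  then show ?thesis unfolding piece_index_def by simp
qed

lemma piece_index_bounds: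
  assumes "0 \<le> s" "s < 1"
  shows "1 - (1/2)^(piece_index s - 1) \<le> s" "s < 1 - (1/2)^piece_index s"
proof -
  define L where "L = - log 2 (1 - s)"
  define k where "k = \<lfloor>L\<rfloor>"
  have "k \<ge> 0" using assms by (simp add: k_def L_def)
  have index: "piece_index s - 1 = nat k" "piece_index s = nat k + 1"
    by (simp_all add: piece_index_def L_def k_def)
  have one_minus_s: "1 - s = 2 powr (- L)" using assms by (simp add: L_def)
  have k_nat: "real_of_int k = real (nat k)" using \<open>k \<ge> 0\<close> by simp
  have pow_k: "((1::real)/2)^(nat k) = 2 powr (- real_of_int k)"
    unfolding k_nat by (simp add: powr_minus_divide powr_realpow power_one_over)
  have "(2::real) powr (- (real_of_int k + 1)) = 2 powr (- real_of_int k) * 2 powr (-1)"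
    by (subst powr_add[symmetric]) simp
  then have pow_Suc_k: "((1::real)/2)^(nat k + 1) = 2 powr (- (real_of_int k + 1))"
    using pow_k by (simp add: powr_minus)
  have "k \<le> L" "L < k + 1" unfolding k_def by linarith+
  then have "(2::real) powr (- L) \<le> 2 powr (- real_of_int k)"
    and "(2::real) powr (- (real_of_int k + 1)) < 2 powr (- L)"
    by simp_all
  then show "1 - (1/2)^(piece_index s - 1) \<le> s" "s < 1 - (1/2)^piece_index s"
    unfolding index(1) pow_k unfolding index(2) pow_Suc_k using one_minus_s by linarith+
qed

lemma alpha_lipschitz: "\<bar>alpha a - alpha b\<bar> \<le> \<bar>a - b\<bar>"
  by (simp add: alpha_def abs_if)

lemma alpha_bounds: "0 \<le> v \<Longrightarrow> v \<le> 1 \<Longrightarrow> 0 \<le> alpha v \<and> alpha v \<le> v \<and> alpha v \<le> 1 - v"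
  by (simp add: alpha_def)

definition bump_height :: "real \<Rightarrow> real" where
  "bump_height s = gamma s (piece_index s)"

lemma bump_height_eq:
  "s < 1 \<Longrightarrow> bump_height s =
     (1/2)^(piece_index s + 1) * alpha (2^piece_index s * (s - (1 - (1/2)^(piece_index s - 1))))"
  using piece_index_ge_1[of s] by (simp add: bump_height_def gamma_below_1)

lemma half_power_facts: "((1::real)/2)^(n + 1) = (1/2)^n / 2" "(2::real)^n * (1/2)^n = 1"
  by (simp_all add: power_one_over)

text \<open>The bump over the piece of s rises and falls with slope 1/2, so its height is at most
  half the distance from s to either end of that piece.\<close>

lemma bump_height_bounds:
  assumes "0 \<le> s" "s < 1"
  shows "0 \<le> bump_height s"
    and "2 * bump_height s \<le> s - (1 - (1/2)^(piece_index s - 1))"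
    and "2 * bump_height s \<le> 1 - (1/2)^piece_index s - s"
proof -
  define n where "n = piece_index s"
  define X :: real where "X = (1/2)^n"
  define u where "u = s - (1 - (1/2)^(n - 1))"
  define v where "v = 2^n * u"
  have "X > 0" by (simp add: X_def)
  have pred: "((1::real)/2)^(n - 1) = 2 * X"
    using piece_index_ge_1 half_power_pred by (simp add: n_def X_def)
  have "0 \<le> u" "u < X"
    using piece_index_bounds[OF assms] pred by (simp_all add: u_def X_def n_def)
  have inverse: "(2::real)^n * X = 1" by (simp add: X_def half_power_facts)
  have "0 \<le> v" "v \<le> 1"
  proof -
    show "0 \<le> v" using \<open>0 \<le> u\<close> by (simp add: v_def)
    have "2^n * u \<le> 2^n * X" using \<open>u < X\<close> by (intro mult_left_mono) simp_all
    then show "v \<le> 1" using inverse by (simp add: v_def)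
  qed
  then have alpha_v: "0 \<le> alpha v" "alpha v \<le> v" "alpha v \<le> 1 - v"
    using alpha_bounds by auto
  have "((1::real)/2)^(n + 1) = X / 2" by (simp add: X_def half_power_facts)
  then have height: "bump_height s = X / 2 * alpha v"
    unfolding bump_height_eq[OF assms(2)] n_def[symmetric] u_def[symmetric] v_def[symmetric] by simp
  have "X * v = u" using inverse by (simp add: v_def algebra_simps)
  show "0 \<le> bump_height s" using alpha_v \<open>X > 0\<close> by (simp add: height)
  have "X * alpha v \<le> X * v" using alpha_v \<open>X > 0\<close> by (intro mult_left_mono) auto
  then show "2 * bump_height s \<le> s - (1 - (1/2)^(piece_index s - 1))"
    using \<open>X * v = u\<close> by (simp add: height u_def n_def)
  have "X * alpha v \<le> X * (1 - v)" using alpha_v \<open>X > 0\<close> by (intro mult_left_mono) auto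
  then show "2 * bump_height s \<le> 1 - (1/2)^piece_index s - s"
    using \<open>X * v = u\<close> pred by (simp add: height u_def n_def[symmetric] X_def[symmetric] algebra_simps)
qed

lemma bump_height_lipschitz:
  assumes "s < 1" "t < 1" "piece_index s = piece_index t"
  shows "2 * \<bar>bump_height s - bump_height t\<bar> \<le> \<bar>s - t\<bar>"
proof -
  define n where "n = piece_index s"
  define X :: real where "X = (1/2)^n"
  define a where "a = 2^n * (s - (1 - (1/2)^(n - 1)))"
  define b where "b = 2^n * (t - (1 - (1/2)^(n - 1)))"
  have "X > 0" by (simp add: X_def)
  have "2 * (bump_height s - bump_height t) = X * (alpha a - alpha b)"
    using bump_height_eq[OF assms(1)] bump_height_eq[OF assms(2)] assms(3)
    by (simp add: a_def b_def n_def X_def half_power_facts algebra_simps)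
  then have "2 * \<bar>bump_height s - bump_height t\<bar> = X * \<bar>alpha a - alpha b\<bar>"
  proof -
    assume "2 * (bump_height s - bump_height t) = X * (alpha a - alpha b)"
    then have "\<bar>2 * (bump_height s - bump_height t)\<bar> = \<bar>X * (alpha a - alpha b)\<bar>" by simp
    with \<open>X > 0\<close> show ?thesis by (simp only: abs_mult)
  qed
  also have "\<dots> \<le> X * \<bar>a - b\<bar>" using \<open>X > 0\<close> alpha_lipschitz by (intro mult_left_mono) auto
  also have "a - b = 2^n * (s - t)" by (simp add: a_def b_def algebra_simps)
  also have "X * \<bar>2^n * (s - t)\<bar> = \<bar>s - t\<bar>"
    by (simp add: X_def abs_mult half_power_facts mult.assoc[symmetric] mult.commute[of "(1/2)^n"])
  finally show ?thesis .
qed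

lemma theta_finite_support:
  "finite S \<Longrightarrow> (\<And>i. i \<notin> S \<Longrightarrow> y i = z i) \<Longrightarrow> theta y z = (\<Sum>i\<in>S. \<bar>y i - z i\<bar>)"
  unfolding theta_def by (rule suminf_finite) auto

lemma theta_commute: "theta y z = theta z y"
  unfolding theta_def by (simp add: abs_minus_commute)

lemma theta_self: "theta y y = 0"
  unfolding theta_def by simp

lemma theta_gamma:
  "theta (gamma s) (gamma t) = (\<Sum>i\<in>{0, piece_index s, piece_index t}. \<bar>gamma s i - gamma t i\<bar>)"
  by (rule theta_finite_support) (auto simp: gamma_coord_other)

lemma theta_gamma_nonneg: "0 \<le> theta (gamma s) (gamma t)"
  unfolding theta_gamma by (rule sum_nonneg) simp

lemma theta_gamma_lower: "s \<le> 1 \<Longrightarrow> t \<le> 1 \<Longrightarrow> \<bar>s - t\<bar> / 2 \<le> theta (gamma s) (gamma t)"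
  using member_le_sum[of 0 "{0, piece_index s, piece_index t}" "\<lambda>i. \<bar>gamma s i - gamma t i\<bar>"]
  by (simp add: theta_gamma gamma_coord_0)

lemma sum_insert_le: "(\<And>i. 0 \<le> f i) \<Longrightarrow> sum f {a, b, c} \<le> f a + f b + (f c :: real)"
  by (simp add: sum.insert_if)

text \<open>Besides the first coordinate, gamma s and gamma t differ only in the bump coordinates
  of their pieces. On a common piece the bump is 1/2-Lipschitz; on different pieces each bump
  is bounded by half the distance to the piece boundary lying between s and t.\<close>

lemma theta_gamma_upper_ordered:
  assumes "0 \<le> s" "s < t" "t \<le> 1"
  shows "theta (gamma s) (gamma t) \<le> 2 * (t - s)"
proof -
  define F where "F i = \<bar>gamma s i - gamma t i\<bar>" for i
  have nonzero: "piece_index s \<noteq> 0" "piece_index t \<noteq> 0"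
    using piece_index_ge_1 by (metis not_one_le_zero)+
  have "s < 1" using assms by simp
  note bump_s = bump_height_bounds[OF \<open>0 \<le> s\<close> \<open>s < 1\<close>]
  have bumps: "F (piece_index s) + F (piece_index t) \<le> t - s"
  proof (cases "t = 1")
    case True
    then have "gamma t (piece_index s) = 0" "gamma t (piece_index t) = 0"
      using nonzero by (simp_all add: gamma_above_1)
    then have "F (piece_index s) = bump_height s"
      using bump_s by (simp add: F_def bump_height_def)
    moreover have "F (piece_index t) \<le> bump_height s"
      using \<open>gamma t (piece_index t) = 0\<close> bump_s nonzero gamma_coord_other[of "piece_index t" s]
      by (cases "piece_index t = piece_index s") (auto simp: F_def bump_height_def)
    moreover have "0 \<le> (1/2::real)^piece_index s" by simp
    ultimately show ?thesis using bump_s(3) True by linarith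
  next
    case False
    then have "t < 1" using assms by simp
    show ?thesis
    proof (cases "piece_index s = piece_index t")
      case True
      then have "2 * F (piece_index s) \<le> t - s" "2 * F (piece_index t) \<le> t - s"
        using bump_height_lipschitz[OF \<open>s < 1\<close> \<open>t < 1\<close> True] assms
        by (simp_all add: F_def bump_height_def abs_minus_commute)
      then show ?thesis by linarith
    next
      case False
      have "piece_index s < piece_index t"
        using piece_index_mono[of s t] assms \<open>t < 1\<close> False by simp
      then have "(1/2::real)^(piece_index t - 1) \<le> (1/2)^piece_index s"
        by (intro power_decreasing) auto
      moreover have "F (piece_index s) = bump_height s" "F (piece_index t) = bump_height t"
        using nonzero False gamma_coord_other[of "piece_index s" t] gamma_coord_other[of "piece_index t" s]
          bump_s(1) bump_height_bounds(1)[of t] assms \<open>t < 1\<close>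
        by (simp_all add: F_def bump_height_def)
      ultimately show ?thesis
        using bump_s(3) bump_height_bounds(2)[of t] assms \<open>t < 1\<close> by linarith
    qed
  qed
  have "theta (gamma s) (gamma t) \<le> F 0 + F (piece_index s) + F (piece_index t)"
    unfolding theta_gamma F_def by (rule sum_insert_le) simp
  also have "F 0 = (t - s) / 2"
    using assms by (simp add: F_def gamma_coord_0 field_simps)
  also have "(t - s) / 2 + F (piece_index s) + F (piece_index t) \<le> 2 * (t - s)"
    using bumps assms by (simp add: field_simps)
  finally show ?thesis .
qed

lemma theta_gamma_upper:
  assumes "0 \<le> s" "s \<le> 1" "0 \<le> t" "t \<le> 1"
  shows "theta (gamma s) (gamma t) \<le> 2 * \<bar>s - t\<bar>"
proof -
  consider "s = t" | "s < t" | "t < s" by linarith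
  then show ?thesis
  proof cases
    case 3
    then show ?thesis
      using theta_gamma_upper_ordered[of t s] assms by (simp add: theta_commute)
  qed (use theta_gamma_upper_ordered[of s t] assms in \<open>simp_all add: theta_self\<close>)
qed

lemma theta_r_lower:
  "0 < r \<Longrightarrow> 0 \<le> s \<Longrightarrow> s \<le> r \<Longrightarrow> 0 \<le> t \<Longrightarrow> t \<le> r \<Longrightarrow> \<bar>s - t\<bar> / 2 \<le> theta_r r s t"
proof -
  assume "0 < r" "0 \<le> s" "s \<le> r" "0 \<le> t" "t \<le> r"
  then have "r * (\<bar>s/r - t/r\<bar> / 2) \<le> r * theta (gamma (s/r)) (gamma (t/r))"
    by (intro mult_left_mono theta_gamma_lower) simp_all
  moreover have "r * (\<bar>s/r - t/r\<bar> / 2) = \<bar>s - t\<bar> / 2"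
    using \<open>0 < r\<close> by (simp add: diff_divide_distrib[symmetric] abs_divide)
  ultimately show ?thesis by (simp add: theta_r_def)
qed

lemma theta_r_upper:
  "0 < r \<Longrightarrow> 0 \<le> s \<Longrightarrow> s \<le> r \<Longrightarrow> 0 \<le> t \<Longrightarrow> t \<le> r \<Longrightarrow> theta_r r s t \<le> 2 * \<bar>s - t\<bar>"
proof -
  assume "0 < r" "0 \<le> s" "s \<le> r" "0 \<le> t" "t \<le> r"
  then have "r * theta (gamma (s/r)) (gamma (t/r)) \<le> r * (2 * \<bar>s/r - t/r\<bar>)"
    by (intro mult_left_mono theta_gamma_upper) simp_all
  moreover have "r * (2 * \<bar>s/r - t/r\<bar>) = 2 * \<bar>s - t\<bar>"
    using \<open>0 < r\<close> by (simp add: diff_divide_distrib[symmetric] abs_divide)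
  ultimately show ?thesis by (simp add: theta_r_def)
qed

lemma theta_r_nonneg: "0 \<le> r \<Longrightarrow> 0 \<le> theta_r r s t"
  by (simp add: theta_r_def theta_gamma_nonneg)

lemma theta_r_self: "theta_r r s s = 0"
  by (simp add: theta_r_def theta_self)

lemma theta_r_commute: "theta_r r s t = theta_r r t s"
  by (simp add: theta_r_def theta_commute)

section \<open>Levels of the tree\<close>

lemma rr_pos: "rr j n > 0"
  by (simp add: rr_def)

lemma dd_nonneg: "0 \<le> dd j n y y'"
  unfolding dd_def by (rule theta_r_nonneg) (simp add: less_imp_le rr_pos)

lemma dd_self: "dd j n y y = 0"
  unfolding dd_def by (rule theta_r_self)

lemma dd_commute: "dd j n y y' = dd j n y' y"
  unfolding dd_def by (rule theta_r_commute)

lemma dd_lower: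
  "0 \<le> y \<Longrightarrow> y \<le> rr j n \<Longrightarrow> 0 \<le> y' \<Longrightarrow> y' \<le> rr j n \<Longrightarrow> \<bar>y - y'\<bar> / 2 \<le> dd j n y y'"
  unfolding dd_def by (rule theta_r_lower) (simp_all add: rr_pos)

lemma dd_upper:
  "0 \<le> y \<Longrightarrow> y \<le> rr j n \<Longrightarrow> 0 \<le> y' \<Longrightarrow> y' \<le> rr j n \<Longrightarrow> dd j n y y' \<le> 2 * \<bar>y - y'\<bar>"
  unfolding dd_def by (rule theta_r_upper) (simp_all add: rr_pos)

lemma valid_choice_q_in_Pk: "valid_choice q \<Longrightarrow> q j n \<in> Pk q j"
  unfolding valid_choice_def by blast

lemma valid_choice_inj: "valid_choice q \<Longrightarrow> inj (q j)"
  unfolding valid_choice_def by blast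

lemma valid_choice_coord_nonzero: "valid_choice q \<Longrightarrow> q j n j \<noteq> 0"
  unfolding valid_choice_def by blast

lemma idx_q: "valid_choice q \<Longrightarrow> idx q j (q j n) = n"
  unfolding idx_def using valid_choice_inj[of q j] by (auto intro!: the_equality dest: injD)

lemma Pk_coord_above: "valid_choice q \<Longrightarrow> p \<in> Pk q i \<Longrightarrow> i < k \<Longrightarrow> p k = 0"
proof (induction i arbitrary: p k)
  case (Suc i)
  from Suc.prems(2) consider "p \<in> Pk q i" | n y where "p = (q i n)(Suc i := y)"
    by auto
  then show ?case
    using Suc valid_choice_q_in_Pk[OF Suc.prems(1)] by cases auto
qed simp

lemma q_upd_Suc_zero: "valid_choice q \<Longrightarrow> (q i n)(Suc i := 0) = q i n"
  using Pk_coord_above[OF _ valid_choice_q_in_Pk, of q i "Suc i" n] by (simp add: fun_upd_idem)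

lemma Pk_subset_Suc: "valid_choice q \<Longrightarrow> Pk q i \<subseteq> Pk q (Suc i)"
proof
  fix p assume vc: "valid_choice q" and p: "p \<in> Pk q i"
  show "p \<in> Pk q (Suc i)"
  proof (cases "p \<in> range (q i)")
    case True
    then obtain n where "p = (q i n)(Suc i := 0)" using q_upd_Suc_zero[OF vc] by auto
    then have "\<exists>n' y. p = (q i n')(Suc i := y) \<and> 0 \<le> y \<and> y \<le> rr i n'"
      using rr_pos[of i n] by (intro exI[of _ n] exI[of _ "0::real"]) auto
    then show ?thesis by simp
  qed (use p in simp)
qed

lemma Pk_mono: assumes "valid_choice q" "i \<le> m" shows "Pk q i \<subseteq> Pk q m"
  using assms(2) by (induction m rule: dec_induct) (use Pk_subset_Suc[OF assms(1)] in blast)+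

lemma Pk_SucE:
  assumes vc: "valid_choice q" and p: "p \<in> Pk q (Suc i)"
  obtains "p \<in> Pk q i" "p(Suc i := 0) \<notin> range (q i)" "p (Suc i) = 0"
  | n where "p(Suc i := 0) = q i n" "0 \<le> p (Suc i)" "p (Suc i) \<le> rr i n"
proof -
  from p consider "p \<in> Pk q i" "p \<notin> range (q i)"
    | n y where "p = (q i n)(Suc i := y)" "0 \<le> y" "y \<le> rr i n"
    by auto
  then show ?thesis
  proof cases
    case 1
    moreover have "p (Suc i) = 0" using Pk_coord_above[OF vc 1(1)] by simp
    ultimately show ?thesis using that(1) by (simp add: fun_upd_idem)
  next
    case 2
    then show ?thesis using that(2) q_upd_Suc_zero[OF vc, of i n] by auto
  qed
qed

lemma Pk_Suc_upd_zero:
  assumes vc: "valid_choice q" and p: "p \<in> Pk q (Suc i)"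
  shows "p(Suc i := 0) \<in> Pk q i"
  using Pk_SucE[OF vc p] valid_choice_q_in_Pk[OF vc] fun_upd_idem[of p "Suc i" 0] by metis

section \<open>The metric rho\<close>

declare rho.simps(2)[simp del]

lemma rho_nonneg: "0 \<le> rho q i a b"
  by (induction i arbitrary: a b) (simp_all add: rho.simps Let_def theta_r_nonneg dd_nonneg)

lemma rho_self: "rho q i a a = 0"
  by (induction i arbitrary: a) (simp_all add: rho.simps Let_def theta_r_self dd_self)

lemma rho_commute: "rho q i a b = rho q i b a"
proof (induction i arbitrary: a b)
  case 0 then show ?case by (simp add: theta_r_commute)
next
  case (Suc i)
  define xa where "xa = a(Suc i := 0)"
  define xb where "xb = b(Suc i := 0)"
  have "rho q i xa xb = rho q i xb xa" by (rule Suc.IH)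
  then show ?case
    unfolding rho.simps Let_def xa_def[symmetric] xb_def[symmetric]
    by (cases "xa \<in> range (q i)"; cases "xb \<in> range (q i)"; cases "xa = xb") (simp_all add: dd_commute)
qed

text \<open>The paper's d_n(y, 0) for a = (q_n, y): the distance from a to its foot a(Suc m := 0)
  along the arc over q_n.\<close>

definition foot_dist :: "(nat \<Rightarrow> nat \<Rightarrow> (nat \<Rightarrow> real)) \<Rightarrow> nat \<Rightarrow> (nat \<Rightarrow> real) \<Rightarrow> real" where
  "foot_dist q m a =
     (if a(Suc m := 0) \<in> range (q m) then dd m (idx q m (a(Suc m := 0))) (a (Suc m)) 0 else 0)"

lemma foot_dist_nonneg: "0 \<le> foot_dist q m a"
  by (simp add: foot_dist_def dd_nonneg)

lemma rho_Suc_split: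
  "a(Suc m := 0) \<noteq> b(Suc m := 0) \<Longrightarrow>
   rho q (Suc m) a b = foot_dist q m a + rho q m (a(Suc m := 0)) (b(Suc m := 0)) + foot_dist q m b"
  by (auto simp: rho.simps Let_def foot_dist_def dd_commute)

lemma rho_Suc_same_foot:
  assumes "valid_choice q" "a(Suc m := 0) = q m n" "b(Suc m := 0) = q m n"
  shows "rho q (Suc m) a b = dd m n (a (Suc m)) (b (Suc m))"
  unfolding rho.simps Let_def assms(2,3) by (simp add: idx_q[OF assms(1)])

lemma rho_Suc_to_level:
  assumes "t (Suc m) = 0"
  shows "rho q (Suc m) a t = foot_dist q m a + rho q m (a(Suc m := 0)) t"
proof -
  have t: "t(Suc m := 0) = t" using assms by (simp add: fun_upd_idem)
  show ?thesis
  proof (cases "a(Suc m := 0) = t")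
    case True
    then show ?thesis using assms t by (auto simp: rho.simps Let_def foot_dist_def rho_self)
  next
    case False
    then show ?thesis using rho_Suc_split[of a m t q] assms t by (simp add: foot_dist_def dd_self)
  qed
qed

lemma rho_upd_zero_le: "rho q m (a(Suc m := 0)) (b(Suc m := 0)) \<le> rho q (Suc m) a b"
proof (cases "a(Suc m := 0) = b(Suc m := 0)")
  case True
  then show ?thesis using rho_nonneg[of q "Suc m" a b] by (simp add: rho_self)
next
  case False
  then show ?thesis
    using rho_Suc_split[OF False, of q] foot_dist_nonneg[of q m a] foot_dist_nonneg[of q m b] by simp
qed

lemma foot_dist_bounds:
  assumes vc: "valid_choice q" and a: "a \<in> Pk q (Suc m)"
  shows "0 \<le> a (Suc m)" "a (Suc m) \<le> 2 * foot_dist q m a" "foot_dist q m a \<le> 2 * a (Suc m)"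
proof -
  have "0 \<le> a (Suc m) \<and> a (Suc m) \<le> 2 * foot_dist q m a \<and> foot_dist q m a \<le> 2 * a (Suc m)"
  proof (rule Pk_SucE[OF vc a])
    fix n assume foot: "a(Suc m := 0) = q m n" and "0 \<le> a (Suc m)" "a (Suc m) \<le> rr m n"
    then have "\<bar>a (Suc m) - 0\<bar> / 2 \<le> dd m n (a (Suc m)) 0" "dd m n (a (Suc m)) 0 \<le> 2 * \<bar>a (Suc m) - 0\<bar>"
      using rr_pos[of m n] by (intro dd_lower dd_upper; simp)+
    moreover have "foot_dist q m a = dd m n (a (Suc m)) 0"
      using foot by (simp add: foot_dist_def idx_q[OF vc])
    ultimately show ?thesis using \<open>0 \<le> a (Suc m)\<close> by auto
  qed (auto simp: foot_dist_def)
  then show "0 \<le> a (Suc m)" "a (Suc m) \<le> 2 * foot_dist q m a" "foot_dist q m a \<le> 2 * a (Suc m)"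
    by auto
qed

lemma rho_Suc_eq:
  assumes vc: "valid_choice q" and a: "a \<in> Pk q i" and b: "b \<in> Pk q i"
  shows "rho q (Suc i) a b = rho q i a b"
proof -
  have "a (Suc i) = 0" "b (Suc i) = 0"
    using Pk_coord_above[OF vc a] Pk_coord_above[OF vc b] by auto
  then show ?thesis
    using rho_Suc_to_level[of b i q a] by (simp add: foot_dist_def dd_self fun_upd_idem)
qed

lemma rho_level_eq:
  assumes vc: "valid_choice q" and "i \<le> m" and a: "a \<in> Pk q i" and b: "b \<in> Pk q i"
  shows "rho q m a b = rho q i a b"
  using assms(2)
proof (induction m rule: dec_induct)
  case (step n)
  have "a \<in> Pk q n" "b \<in> Pk q n" using Pk_mono[OF vc step.hyps(1)] a b by auto
  then show ?case using rho_Suc_eq[OF vc] step by simp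
qed simp

lemma rhoinf_eq:
  assumes vc: "valid_choice q" and a: "a \<in> Pk q i" and b: "b \<in> Pk q i"
  shows "rhoinf q a b = rho q i a b"
proof -
  define m where "m = (LEAST m. a \<in> Pk q m \<and> b \<in> Pk q m)"
  have "a \<in> Pk q m \<and> b \<in> Pk q m"
    unfolding m_def by (rule LeastI[of _ i]) (use a b in simp)
  moreover have "m \<le> i"
    unfolding m_def by (rule Least_le) (use a b in simp)
  ultimately show ?thesis using rho_level_eq[OF vc, of m i a b] by (simp add: rhoinf_def m_def)
qed

lemma top_coord_diff_le_rho:
  assumes vc: "valid_choice q" and a: "a \<in> Pk q i" and b: "b \<in> Pk q i"
  shows "\<bar>a i - b i\<bar> \<le> 2 * rho q i a b"
proof (cases i)
  case 0
  then show ?thesis using a b theta_r_lower[of 1 "a 0" "b 0"] by auto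
next
  case (Suc m)
  have a': "a \<in> Pk q (Suc m)" and b': "b \<in> Pk q (Suc m)" using a b Suc by auto
  note foot_a = foot_dist_bounds[OF vc a'] and foot_b = foot_dist_bounds[OF vc b']
  show ?thesis
  proof (cases "a(Suc m := 0) = b(Suc m := 0)")
    case False
    then have "foot_dist q m a + foot_dist q m b \<le> rho q (Suc m) a b"
      using rho_Suc_split[OF False, of q] rho_nonneg[of q m] by simp
    then show ?thesis using Suc foot_a foot_b by (simp add: abs_le_iff)
  next
    case same_foot: True
    show ?thesis
    proof (rule Pk_SucE[OF vc a'])
      assume "a(Suc m := 0) \<notin> range (q m)" "a (Suc m) = 0"
      then have "b (Suc m) = 0" using same_foot by (cases rule: Pk_SucE[OF vc b']) auto
      then show ?thesis using \<open>a (Suc m) = 0\<close> Suc rho_nonneg[of q i a b] by simp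
    next
      fix n assume foot: "a(Suc m := 0) = q m n" and "0 \<le> a (Suc m)" "a (Suc m) \<le> rr m n"
      have b_foot: "b(Suc m := 0) = q m n" using same_foot foot by simp
      then have "0 \<le> b (Suc m)" "b (Suc m) \<le> rr m n"
        using Pk_SucE[OF vc b'] valid_choice_inj[OF vc, of m] by (metis injD rangeI)+
      then have "\<bar>a (Suc m) - b (Suc m)\<bar> / 2 \<le> dd m n (a (Suc m)) (b (Suc m))"
        using \<open>0 \<le> a (Suc m)\<close> \<open>a (Suc m) \<le> rr m n\<close> by (intro dd_lower)
      also have "\<dots> = rho q (Suc m) a b"
        by (rule rho_Suc_same_foot[OF vc foot b_foot, symmetric])
      finally show ?thesis using Suc by simp
    qed
  qed
qed

definition level_proj :: "nat \<Rightarrow> (nat \<Rightarrow> real) \<Rightarrow> (nat \<Rightarrow> real)" where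
  "level_proj i x = (\<lambda>k. if k \<le> i then x k else 0)"

lemma level_proj_coord: "j \<le> i \<Longrightarrow> level_proj i x j = x j"
  by (simp add: level_proj_def)

lemma level_proj_id: "valid_choice q \<Longrightarrow> x \<in> Pk q i \<Longrightarrow> level_proj i x = x"
  unfolding level_proj_def using Pk_coord_above[of q x i] by (auto simp: fun_eq_iff)

lemma level_proj_upd_Suc: "i \<le> m \<Longrightarrow> level_proj i (x(Suc m := 0)) = level_proj i x"
  unfolding level_proj_def by (auto simp: fun_eq_iff)

lemma level_proj_in_Pk:
  assumes vc: "valid_choice q" and "i \<le> m" and x: "x \<in> Pk q m"
  shows "level_proj i x \<in> Pk q i"
  using assms(2) x
proof (induction m arbitrary: x rule: dec_induct)
  case base then show ?case using level_proj_id[OF vc] by simp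
next
  case (step n)
  then show ?case using Pk_Suc_upd_zero[OF vc step.prems] level_proj_upd_Suc[OF step.hyps(1)] by metis
qed

lemma rho_level_proj_le:
  assumes vc: "valid_choice q" and "i \<le> m" and a: "a \<in> Pk q m" and b: "b \<in> Pk q m"
  shows "rho q i (level_proj i a) (level_proj i b) \<le> rho q m a b"
  using assms(2) a b
proof (induction m arbitrary: a b rule: dec_induct)
  case base then show ?case using level_proj_id[OF vc] by simp
next
  case (step n)
  have "rho q i (level_proj i (a(Suc n := 0))) (level_proj i (b(Suc n := 0)))
      \<le> rho q n (a(Suc n := 0)) (b(Suc n := 0))"
    using step.IH Pk_Suc_upd_zero[OF vc step.prems(1)] Pk_Suc_upd_zero[OF vc step.prems(2)] by blast
  also have "\<dots> \<le> rho q (Suc n) a b" by (rule rho_upd_zero_le)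
  finally show ?case using level_proj_upd_Suc[OF step.hyps(1)] by simp
qed

lemma coord_diff_le_rho:
  assumes vc: "valid_choice q" and a: "a \<in> Pk q m" and b: "b \<in> Pk q m"
  shows "\<bar>a j - b j\<bar> \<le> 2 * rho q m a b"
proof (cases "j \<le> m")
  case True
  have "\<bar>level_proj j a j - level_proj j b j\<bar> \<le> 2 * rho q j (level_proj j a) (level_proj j b)"
    using top_coord_diff_le_rho[OF vc level_proj_in_Pk[OF vc True a] level_proj_in_Pk[OF vc True b]] .
  also have "\<dots> \<le> 2 * rho q m a b" using rho_level_proj_le[OF vc True a b] by simp
  finally show ?thesis by (simp add: level_proj_coord)
next
  case False
  then show ?thesis
    using Pk_coord_above[OF vc a, of j] Pk_coord_above[OF vc b, of j] rho_nonneg[of q m a b] by simp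
qed

text \<open>Distinct projections onto level i mean the geodesic from a to b passes through
  both of them.\<close>

lemma rho_level_proj_tree:
  assumes vc: "valid_choice q" and "i \<le> m" and a: "a \<in> Pk q m" and b: "b \<in> Pk q m"
    and "level_proj i a \<noteq> level_proj i b"
  shows "rho q m a (level_proj i a) + rho q m (level_proj i b) b \<le> rho q m a b"
  using assms(2-)
proof (induction m arbitrary: a b rule: dec_induct)
  case base then show ?case using level_proj_id[OF vc] by (simp add: rho_self rho_nonneg)
next
  case (step n)
  define a' where "a' = a(Suc n := 0)"
  define b' where "b' = b(Suc n := 0)"
  have proj: "level_proj i a' = level_proj i a" "level_proj i b' = level_proj i b"
    using level_proj_upd_Suc[OF step.hyps(1)] a'_def b'_def by auto
  then have "a' \<noteq> b'" using step.prems(3) by auto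
  have "a' \<in> Pk q n" "b' \<in> Pk q n"
    using Pk_Suc_upd_zero[OF vc step.prems(1)] Pk_Suc_upd_zero[OF vc step.prems(2)] a'_def b'_def by auto
  then have IH: "rho q n a' (level_proj i a) + rho q n (level_proj i b) b' \<le> rho q n a' b'"
    using step.IH[of a' b'] proj step.prems(3) by simp
  have "level_proj i a (Suc n) = 0" "level_proj i b (Suc n) = 0"
    using step.hyps(1) by (auto simp: level_proj_def)
  then have "rho q (Suc n) a (level_proj i a) = foot_dist q n a + rho q n a' (level_proj i a)"
    "rho q (Suc n) (level_proj i b) b = foot_dist q n b + rho q n (level_proj i b) b'"
    using rho_Suc_to_level[of _ n q] rho_commute unfolding a'_def b'_def by metis+
  moreover have "rho q (Suc n) a b = foot_dist q n a + rho q n a' b' + foot_dist q n b"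
    using rho_Suc_split[of a n b q] \<open>a' \<noteq> b'\<close> unfolding a'_def b'_def by simp
  ultimately show ?case using IH by simp
qed

lemma coord_outside_Pk:
  assumes vc: "valid_choice q" and "x \<in> Pk q m" "x \<notin> Pk q j"
  shows "x j \<in> (\<lambda>x. x j) ` range (q j)"
  using assms(2,3)
proof (induction m arbitrary: x)
  case 0 then show ?case using Pk_mono[OF vc, of 0 j] by auto
next
  case (Suc m)
  show ?case
  proof (rule Pk_SucE[OF vc Suc.prems(1)])
    assume "x \<in> Pk q m" then show ?thesis using Suc by blast
  next
    fix n assume foot: "x(Suc m := 0) = q m n"
    have xj: "x j = q m n j" if "j \<noteq> Suc m" using foot that by (metis fun_upd_other)
    consider "m = j" | "Suc m \<le> j" | "j < m" by linarith
    then show ?thesis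
    proof cases
      case 1 then show ?thesis using xj by auto
    next
      case 2 then show ?thesis using Pk_mono[OF vc 2] Suc.prems by blast
    next
      case 3
      then have "q m n \<notin> Pk q j"
        using Pk_coord_above[OF vc _ 3, of "q m n"] valid_choice_coord_nonzero[OF vc, of m n] by auto
      then show ?thesis using Suc.IH valid_choice_q_in_Pk[OF vc] xj 3 by simp
    qed
  qed
qed

section \<open>Completeness of the levels\<close>

definition rho_Cauchy :: "(nat \<Rightarrow> nat \<Rightarrow> (nat \<Rightarrow> real)) \<Rightarrow> nat \<Rightarrow> (nat \<Rightarrow> nat \<Rightarrow> real) \<Rightarrow> bool" where
  "rho_Cauchy q i a \<longleftrightarrow> (\<forall>e>0. \<exists>N. \<forall>k\<ge>N. \<forall>l\<ge>N. rho q i (a k) (a l) < e)"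

lemma rho_Cauchy_coord_convergent:
  assumes vc: "valid_choice q" and a: "\<And>k. a k \<in> Pk q i" and "rho_Cauchy q i a"
  shows "convergent (\<lambda>k. a k j)"
  unfolding Cauchy_convergent_iff[symmetric] Cauchy_def
proof (intro allI impI)
  fix e :: real assume "e > 0"
  then obtain N where N: "\<forall>k\<ge>N. \<forall>l\<ge>N. rho q i (a k) (a l) < e / 2"
    using \<open>rho_Cauchy q i a\<close> unfolding rho_Cauchy_def by (meson half_gt_zero)
  show "\<exists>N. \<forall>k\<ge>N. \<forall>l\<ge>N. dist (a k j) (a l j) < e"
  proof (intro exI allI impI)
    fix k l assume "N \<le> k" "N \<le> l"
    then have "rho q i (a k) (a l) < e / 2" using N by blast
    then show "dist (a k j) (a l j) < e"
      using coord_diff_le_rho[OF vc a a, of k j l] by (simp add: dist_real_def)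
  qed
qed

lemma rho_Cauchy_upd_zero:
  assumes "rho_Cauchy q (Suc i) a"
  shows "rho_Cauchy q i (\<lambda>k. (a k)(Suc i := 0))"
  unfolding rho_Cauchy_def
proof (intro allI impI)
  fix e :: real assume "e > 0"
  then obtain N where "\<forall>k\<ge>N. \<forall>l\<ge>N. rho q (Suc i) (a k) (a l) < e"
    using assms unfolding rho_Cauchy_def by blast
  then show "\<exists>N. \<forall>k\<ge>N. \<forall>l\<ge>N. rho q i ((a k)(Suc i := 0)) ((a l)(Suc i := 0)) < e"
    using rho_upd_zero_le[of q i] order.strict_trans1 by blast
qed

lemma rho_tendsto_zero_bound:
  assumes "eventually (\<lambda>k. rho q i (a k) p \<le> g k) sequentially" "g \<longlonglongrightarrow> 0"
  shows "(\<lambda>k. rho q i (a k) p) \<longlonglongrightarrow> 0"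
  using assms(1) by (intro Lim_null_comparison[OF _ assms(2)]) (simp add: rho_nonneg)

lemma rho_Cauchy_level_0_converges:
  assumes vc: "valid_choice q" and a: "\<And>k. a k \<in> Pk q 0" and "rho_Cauchy q 0 a"
  shows "\<exists>p\<in>Pk q 0. (\<lambda>k. rho q 0 (a k) p) \<longlonglongrightarrow> 0"
proof -
  obtain s where s: "(\<lambda>k. a k 0) \<longlonglongrightarrow> s"
    using rho_Cauchy_coord_convergent[OF assms] by (auto simp: convergent_def)
  have bounds: "0 \<le> a k 0" "a k 0 \<le> 1" for k using a[of k] by auto
  then have "0 \<le> s" "s \<le> 1" using s by (auto intro: LIMSEQ_le_const LIMSEQ_le_const2)
  define p where "p = (\<lambda>i::nat. if i = 0 then s else 0)"
  have "p \<in> Pk q 0" using \<open>0 \<le> s\<close> \<open>s \<le> 1\<close> by (simp add: p_def)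
  moreover have "(\<lambda>k. rho q 0 (a k) p) \<longlonglongrightarrow> 0"
  proof (rule rho_tendsto_zero_bound)
    show "eventually (\<lambda>k. rho q 0 (a k) p \<le> 2 * \<bar>a k 0 - s\<bar>) sequentially"
      using bounds \<open>0 \<le> s\<close> \<open>s \<le> 1\<close> by (intro always_eventually allI) (simp add: p_def theta_r_upper)
    have "(\<lambda>k. 2 * \<bar>a k 0 - s\<bar>) \<longlonglongrightarrow> 2 * \<bar>s - s\<bar>" by (intro tendsto_intros s)
    then show "(\<lambda>k. 2 * \<bar>a k 0 - s\<bar>) \<longlonglongrightarrow> 0" by simp
  qed
  ultimately show ?thesis by blast
qed

lemma rho_Suc_converges_to_foot_limit:
  assumes vc: "valid_choice q" and a: "\<And>k. a k \<in> Pk q (Suc i)" and p: "p \<in> Pk q i"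
    and feet: "(\<lambda>k. rho q i ((a k)(Suc i := 0)) p) \<longlonglongrightarrow> 0"
    and height: "(\<lambda>k. a k (Suc i)) \<longlonglongrightarrow> 0"
  shows "(\<lambda>k. rho q (Suc i) (a k) p) \<longlonglongrightarrow> 0"
proof (rule rho_tendsto_zero_bound)
  have "p (Suc i) = 0" using Pk_coord_above[OF vc p] by simp
  then show "eventually (\<lambda>k. rho q (Suc i) (a k) p \<le> 2 * a k (Suc i) + rho q i ((a k)(Suc i := 0)) p) sequentially"
    using rho_Suc_to_level[of p i q] foot_dist_bounds(3)[OF vc a] by (intro always_eventually allI) simp
  show "(\<lambda>k. 2 * a k (Suc i) + rho q i ((a k)(Suc i := 0)) p) \<longlonglongrightarrow> 0"
    using tendsto_add[OF tendsto_mult_right_zero[OF height] feet] by simp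
qed

text \<open>Points at height more than y/2 whose feet differ are more than y/2 apart, so a
  Cauchy sequence with positive limit height eventually stays on one stem.\<close>

lemma rho_Cauchy_eventually_same_foot:
  assumes vc: "valid_choice q" and a: "\<And>k. a k \<in> Pk q (Suc i)" and "rho_Cauchy q (Suc i) a"
    and height: "(\<lambda>k. a k (Suc i)) \<longlonglongrightarrow> y" and "y > 0"
  obtains N n where "\<And>k. k \<ge> N \<Longrightarrow> (a k)(Suc i := 0) = q i n"
proof -
  obtain N1 where N1: "\<And>k. k \<ge> N1 \<Longrightarrow> a k (Suc i) > y / 2"
    using order_tendstoD(1)[OF height, of "y / 2"] \<open>y > 0\<close> by (auto simp: eventually_sequentially)
  obtain N2 where N2: "\<And>k l. k \<ge> N2 \<Longrightarrow> l \<ge> N2 \<Longrightarrow> rho q (Suc i) (a k) (a l) < y / 2"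
    using \<open>rho_Cauchy q (Suc i) a\<close> \<open>y > 0\<close> unfolding rho_Cauchy_def by (meson half_gt_zero)
  define N where "N = max N1 N2"
  have same: "(a k)(Suc i := 0) = (a N)(Suc i := 0)" if "k \<ge> N" for k
  proof (rule ccontr)
    assume "(a k)(Suc i := 0) \<noteq> (a N)(Suc i := 0)"
    then have "foot_dist q i (a k) + foot_dist q i (a N) \<le> rho q (Suc i) (a k) (a N)"
      using rho_Suc_split[of "a k" i "a N" q] rho_nonneg[of q i] by simp
    moreover have "y / 2 < a k (Suc i)" "y / 2 < a N (Suc i)" "rho q (Suc i) (a k) (a N) < y / 2"
      using N1 N2 that by (simp_all add: N_def)
    ultimately show False
      using foot_dist_bounds(2)[OF vc a, of k] foot_dist_bounds(2)[OF vc a, of N] by linarith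
  qed
  have "y / 2 < a N (Suc i)" using N1 by (simp add: N_def)
  then have "a N (Suc i) \<noteq> 0" using \<open>y > 0\<close> by linarith
  then obtain n where "(a N)(Suc i := 0) = q i n" using Pk_SucE[OF vc a[of N]] by metis
  then show ?thesis using that same by metis
qed

lemma rho_Cauchy_converges_positive_height:
  assumes vc: "valid_choice q" and a: "\<And>k. a k \<in> Pk q (Suc i)" and "rho_Cauchy q (Suc i) a"
    and height: "(\<lambda>k. a k (Suc i)) \<longlonglongrightarrow> y" and "y > 0"
  shows "\<exists>p\<in>Pk q (Suc i). (\<lambda>k. rho q (Suc i) (a k) p) \<longlonglongrightarrow> 0"
proof -
  obtain N n where foot: "\<And>k. k \<ge> N \<Longrightarrow> (a k)(Suc i := 0) = q i n"
    using rho_Cauchy_eventually_same_foot[OF assms] by blast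
  have on_stem: "0 \<le> a k (Suc i) \<and> a k (Suc i) \<le> rr i n" if "k \<ge> N" for k
    using Pk_SucE[OF vc a[of k]] foot[OF that] valid_choice_inj[OF vc, of i] by (metis injD rangeI)
  then have "y \<le> rr i n"
    by (intro LIMSEQ_le_const2[OF height]) blast
  define p where "p = (q i n)(Suc i := y)"
  have "p \<in> Pk q (Suc i)" using \<open>y > 0\<close> \<open>y \<le> rr i n\<close> by (auto simp: p_def)
  moreover have "(\<lambda>k. rho q (Suc i) (a k) p) \<longlonglongrightarrow> 0"
  proof (rule rho_tendsto_zero_bound)
    have "p(Suc i := 0) = q i n" using q_upd_Suc_zero[OF vc] by (simp add: p_def)
    then have "rho q (Suc i) (a k) p \<le> 2 * \<bar>a k (Suc i) - y\<bar>" if "k \<ge> N" for k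
      using rho_Suc_same_foot[OF vc foot[OF that]] on_stem[OF that] \<open>y > 0\<close> \<open>y \<le> rr i n\<close>
      by (simp add: p_def dd_upper)
    then show "eventually (\<lambda>k. rho q (Suc i) (a k) p \<le> 2 * \<bar>a k (Suc i) - y\<bar>) sequentially"
      by (auto simp: eventually_sequentially)
    have "(\<lambda>k. 2 * \<bar>a k (Suc i) - y\<bar>) \<longlonglongrightarrow> 2 * \<bar>y - y\<bar>" by (intro tendsto_intros height)
    then show "(\<lambda>k. 2 * \<bar>a k (Suc i) - y\<bar>) \<longlonglongrightarrow> 0" by simp
  qed
  ultimately show ?thesis by blast
qed

lemma rho_Cauchy_converges:
  assumes vc: "valid_choice q" and "\<And>k. a k \<in> Pk q i" and "rho_Cauchy q i a"
  shows "\<exists>p\<in>Pk q i. (\<lambda>k. rho q i (a k) p) \<longlonglongrightarrow> 0"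
  using assms(2,3)
proof (induction i arbitrary: a)
  case 0
  then show ?case using rho_Cauchy_level_0_converges[OF vc] by blast
next
  case (Suc i)
  obtain p where p: "p \<in> Pk q i" and feet: "(\<lambda>k. rho q i ((a k)(Suc i := 0)) p) \<longlonglongrightarrow> 0"
    using Suc.IH[of "\<lambda>k. (a k)(Suc i := 0)"] Pk_Suc_upd_zero[OF vc Suc.prems(1)]
      rho_Cauchy_upd_zero[OF Suc.prems(2)] by blast
  obtain y where height: "(\<lambda>k. a k (Suc i)) \<longlonglongrightarrow> y"
    using rho_Cauchy_coord_convergent[OF vc Suc.prems] by (auto simp: convergent_def)
  have "0 \<le> y"
    using foot_dist_bounds(1)[OF vc Suc.prems(1)] by (intro LIMSEQ_le_const[OF height]) blast
  show ?case
  proof (cases "y = 0")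
    case True
    then show ?thesis
      using rho_Suc_converges_to_foot_limit[OF vc Suc.prems(1) p feet] height
        Pk_subset_Suc[OF vc] p by blast
  next
    case False
    then show ?thesis
      using rho_Cauchy_converges_positive_height[OF vc Suc.prems height] \<open>0 \<le> y\<close> by simp
  qed
qed

section \<open>Coordinates on the completion\<close>

lemma Pk_subset_Pinf: "Pk q i \<subseteq> Pinf q"
  by (auto simp: Pinf_def)

lemma Pinf_common_level:
  assumes vc: "valid_choice q" and "x \<in> Pinf q" "y \<in> Pinf q"
  obtains m where "j \<le> m" "x \<in> Pk q m" "y \<in> Pk q m"
proof -
  obtain i1 i2 where "x \<in> Pk q i1" "y \<in> Pk q i2" using assms(2,3) by (auto simp: Pinf_def)
  moreover have "i1 \<le> max j (max i1 i2)" "i2 \<le> max j (max i1 i2)" by auto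
  ultimately have "x \<in> Pk q (max j (max i1 i2))" "y \<in> Pk q (max j (max i1 i2))"
    using Pk_mono[OF vc] by blast+
  then show ?thesis using that[of "max j (max i1 i2)"] by simp
qed

lemma coord_diff_le_rhoinf:
  assumes vc: "valid_choice q" and "x \<in> Pinf q" "y \<in> Pinf q"
  shows "\<bar>x j - y j\<bar> \<le> 2 * rhoinf q x y"
proof -
  obtain m where "x \<in> Pk q m" "y \<in> Pk q m" using Pinf_common_level[OF assms] .
  then show ?thesis using coord_diff_le_rho[OF vc] rhoinf_eq[OF vc] by metis
qed

locale Pinf_isometry =
  fixes q :: "nat \<Rightarrow> nat \<Rightarrow> (nat \<Rightarrow> real)" and iota :: "(nat \<Rightarrow> real) \<Rightarrow> 'm::metric_space"
  assumes vc: "valid_choice q"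
    and iso: "\<forall>x\<in>Pinf q. \<forall>y\<in>Pinf q. dist (iota x) (iota y) = rhoinf q x y"
begin

lemma dist_iota_eq_rho:
  assumes "x \<in> Pk q m" "y \<in> Pk q m"
  shows "dist (iota x) (iota y) = rho q m x y"
proof -
  have "x \<in> Pinf q" "y \<in> Pinf q" using assms Pk_subset_Pinf by blast+
  then show ?thesis using iso rhoinf_eq[OF vc assms] by simp
qed

lemma coord_diff_le_dist: "x \<in> Pinf q \<Longrightarrow> y \<in> Pinf q \<Longrightarrow> \<bar>x j - y j\<bar> \<le> 2 * dist (iota x) (iota y)"
  using coord_diff_le_rhoinf[OF vc, of x y j] iso by simp

lemma closed_iota_Pk: "closed (iota ` Pk q j)"
  unfolding closed_sequential_limits
proof (intro allI impI, elim conjE)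
  fix w z assume "\<forall>k. w k \<in> iota ` Pk q j" and lim: "w \<longlonglongrightarrow> z"
  then have "\<forall>k. \<exists>x. x \<in> Pk q j \<and> w k = iota x" by blast
  then obtain a where "\<forall>k. a k \<in> Pk q j \<and> w k = iota (a k)" by metis
  then have a: "\<And>k. a k \<in> Pk q j" and w: "w = (\<lambda>k. iota (a k))" by auto
  have "Cauchy (\<lambda>k. iota (a k))" using LIMSEQ_imp_Cauchy[OF lim] by (simp add: w)
  then have "rho_Cauchy q j a"
    unfolding rho_Cauchy_def Cauchy_def by (simp only: dist_iota_eq_rho[OF a a])
  then obtain p where p: "p \<in> Pk q j" and "(\<lambda>k. rho q j (a k) p) \<longlonglongrightarrow> 0"
    using rho_Cauchy_converges[OF vc, of a] a by blast
  then have "(\<lambda>k. dist (iota (a k)) (iota p)) \<longlonglongrightarrow> 0"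
    by (simp only: dist_iota_eq_rho[OF a p])
  then have "w \<longlonglongrightarrow> iota p" unfolding w by (rule tendsto_dist_iff[THEN iffD2])
  then have "z = iota p" using lim by (rule LIMSEQ_unique[rotated])
  then show "z \<in> iota ` Pk q j" using p by blast
qed

text \<open>Near a point z at distance at least \<delta> from level j, the projections of two points
  onto level j cannot differ: otherwise, by the tree inequality, their distance would
  exceed \<delta>/2.\<close>

lemma coord_eq_near_point_off_level:
  assumes "\<delta> > 0" and far: "\<forall>p\<in>Pk q j. \<delta> \<le> dist (iota p) z"
    and x: "x \<in> Pinf q" "dist (iota x) z < \<delta> / 4" and x': "x' \<in> Pinf q" "dist (iota x') z < \<delta> / 4"
  shows "x j = x' j"
proof (rule ccontr)
  assume "x j \<noteq> x' j"
  obtain m where m: "j \<le> m" "x \<in> Pk q m" "x' \<in> Pk q m" using Pinf_common_level[OF vc x(1) x'(1)] .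
  define p p' where "p = level_proj j x" and "p' = level_proj j x'"
  have "p j = x j" "p' j = x' j" by (simp_all add: p_def p'_def level_proj_coord)
  then have "p \<noteq> p'" using \<open>x j \<noteq> x' j\<close> by auto
  have "p \<in> Pk q j" "p' \<in> Pk q j" using level_proj_in_Pk[OF vc m(1)] m by (auto simp: p_def p'_def)
  then have "p \<in> Pk q m" "p' \<in> Pk q m" using Pk_mono[OF vc m(1)] by auto
  then have "dist (iota x) (iota p) + dist (iota p') (iota x') \<le> dist (iota x) (iota x')"
    using rho_level_proj_tree[OF vc m] \<open>p \<noteq> p'\<close> m by (simp add: dist_iota_eq_rho p_def p'_def)
  moreover have "\<delta> \<le> dist (iota p) z" "\<delta> \<le> dist (iota p') z"
    using far \<open>p \<in> Pk q j\<close> \<open>p' \<in> Pk q j\<close> by auto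
  moreover have "dist (iota p) z \<le> dist (iota x) (iota p) + dist (iota x) z"
    by (rule dist_triangle3)
  moreover have "dist (iota p') z \<le> dist (iota p') (iota x') + dist (iota x') z"
    by (rule dist_triangle)
  moreover have "dist (iota x) (iota x') \<le> dist (iota x) z + dist (iota x') z"
    by (rule dist_triangle2)
  ultimately show False using x(2) x'(2) \<open>\<delta> > 0\<close> by linarith
qed

lemma coord_extension:
  obtains g where "continuous_on (closure (iota ` Pinf q)) g" "\<And>x. x \<in> Pinf q \<Longrightarrow> g (iota x) = x j"
proof -
  define f where "f w = inv_into (Pinf q) iota w j" for w
  have f: "f (iota x) = x j" if "x \<in> Pinf q" for x
    using coord_diff_le_dist[of "inv_into (Pinf q) iota (iota x)" x j]
    by (simp add: f_def inv_into_into f_inv_into_f that)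
  have "uniformly_continuous_on (iota ` Pinf q) f"
    unfolding uniformly_continuous_on_def
  proof (intro allI impI)
    fix e :: real assume "e > 0"
    have "dist (f (iota x')) (f (iota x)) < e"
      if "x \<in> Pinf q" "x' \<in> Pinf q" "dist (iota x') (iota x) < e / 2" for x x'
      using coord_diff_le_dist[OF that(2,1), of j] that by (simp add: f dist_real_def)
    then show "\<exists>d>0. \<forall>w\<in>iota ` Pinf q. \<forall>w'\<in>iota ` Pinf q. dist w' w < d \<longrightarrow> dist (f w') (f w) < e"
      using \<open>e > 0\<close> by (intro exI[of _ "e / 2"]) auto
  qed
  then obtain g where g: "uniformly_continuous_on (closure (iota ` Pinf q)) g"
    and fg: "\<And>w. w \<in> iota ` Pinf q \<Longrightarrow> f w = g w"
    using uniformly_continuous_on_extension_on_closure by metis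
  show ?thesis
  proof (rule that)
    show "continuous_on (closure (iota ` Pinf q)) g" using g by (rule uniformly_continuous_imp_continuous)
    show "g (iota x) = x j" if "x \<in> Pinf q" for x using fg[of "iota x"] f[OF that] that by simp
  qed
qed

lemma coord_extension_off_level:
  assumes g: "continuous_on (closure (iota ` Pinf q)) g" "\<And>x. x \<in> Pinf q \<Longrightarrow> g (iota x) = x j"
    and z: "z \<in> closure (iota ` Pinf q)" "z \<notin> iota ` Pk q j"
  shows "g z \<in> (\<lambda>x. x j) ` range (q j)"
proof -
  have "\<not> (\<forall>e>0. \<exists>y\<in>iota ` Pk q j. dist y z < e)"
    using z(2) closed_approachable[OF closed_iota_Pk] by blast
  then obtain \<delta> where "\<delta> > 0" and far: "\<forall>p\<in>Pk q j. \<delta> \<le> dist (iota p) z"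
    by (auto simp: not_less)
  obtain w where "\<forall>k. w k \<in> iota ` Pinf q" and "w \<longlonglongrightarrow> z"
    using z(1) unfolding closure_sequential by blast
  then have "\<forall>k. \<exists>x. x \<in> Pinf q \<and> w k = iota x" by blast
  then obtain u where u_w: "\<forall>k. u k \<in> Pinf q \<and> w k = iota (u k)" by metis
  then have u: "\<And>k. u k \<in> Pinf q" by blast
  have "w = (\<lambda>k. iota (u k))" using u_w by auto
  with \<open>w \<longlonglongrightarrow> z\<close> have lim: "(\<lambda>k. iota (u k)) \<longlonglongrightarrow> z" by simp
  have "eventually (\<lambda>k. dist (iota (u k)) z < \<delta> / 4) sequentially"
    using lim \<open>\<delta> > 0\<close> by (intro tendstoD) auto
  then obtain N where N: "\<And>k. k \<ge> N \<Longrightarrow> dist (iota (u k)) z < \<delta> / 4"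
    by (auto simp: eventually_sequentially)
  have "g (iota (u k)) = u N j" if "k \<ge> N" for k
    using coord_eq_near_point_off_level[OF \<open>\<delta> > 0\<close> far u N[OF that] u N] g(2)[OF u] by simp
  then have "(\<lambda>k. g (iota (u k))) \<longlonglongrightarrow> u N j"
    by (intro tendsto_eventually eventually_sequentiallyI)
  moreover have "(\<lambda>k. g (iota (u k))) \<longlonglongrightarrow> g z"
    using u closure_subset by (intro continuous_on_tendsto_compose[OF g(1) lim z(1)] always_eventually) blast
  ultimately have "g z = u N j" by (rule LIMSEQ_unique[rotated])
  moreover have "u N \<notin> Pk q j"
  proof
    assume "u N \<in> Pk q j"
    then have "\<delta> \<le> dist (iota (u N)) z" using far by blast
    with N[of N] \<open>\<delta> > 0\<close> show False by simp
  qed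
  moreover obtain m where "u N \<in> Pk q m" using u by (auto simp: Pinf_def)
  ultimately show ?thesis using coord_outside_Pk[OF vc, of "u N" m j] by simp
qed

end

theorem lemma4p8:
  fixes q :: "nat \<Rightarrow> nat \<Rightarrow> (nat \<Rightarrow> real)"
    and M :: "'m::metric_space set"
    and iota :: "(nat \<Rightarrow> real) \<Rightarrow> 'm"
    and j :: nat
  assumes "valid_choice q"
    and "\<forall>x\<in>Pinf q. \<forall>y\<in>Pinf q. dist (iota x) (iota y) = rhoinf q x y"
    and "iota ` Pinf q \<subseteq> M"
    and "M \<subseteq> closure (iota ` Pinf q)"
    and "complete M"
  shows "(\<forall>x\<in>Pinf q. \<forall>e>0. \<exists>\<delta>>0. \<forall>y\<in>Pinf q. rhoinf q x y < \<delta> \<longrightarrow> \<bar>y j - x j\<bar> < e)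
       \<and> (\<exists>f :: 'm \<Rightarrow> real. continuous_on M f
            \<and> (\<forall>x\<in>Pinf q. f (iota x) = x j)
            \<and> (\<forall>z \<in> M - iota ` Pk q j. f z \<in> (\<lambda>x. x j) ` range (q j)))"
proof -
  interpret Pinf_isometry q iota using assms(1,2) by unfold_locales
  obtain g where g: "continuous_on (closure (iota ` Pinf q)) g" "\<And>x. x \<in> Pinf q \<Longrightarrow> g (iota x) = x j"
    using coord_extension by blast
  have "\<forall>x\<in>Pinf q. \<forall>e>0. \<exists>\<delta>>0. \<forall>y\<in>Pinf q. rhoinf q x y < \<delta> \<longrightarrow> \<bar>y j - x j\<bar> < e"
  proof (intro ballI allI impI)
    fix x and e :: real assume "x \<in> Pinf q" "e > 0"
    have "\<bar>y j - x j\<bar> < e" if "y \<in> Pinf q" "rhoinf q x y < e / 2" for y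
      using coord_diff_le_rhoinf[OF assms(1) \<open>x \<in> Pinf q\<close> that(1), of j] that(2) by simp
    then show "\<exists>\<delta>>0. \<forall>y\<in>Pinf q. rhoinf q x y < \<delta> \<longrightarrow> \<bar>y j - x j\<bar> < e"
      using \<open>e > 0\<close> by (intro exI[of _ "e / 2"]) auto
  qed
  moreover have "continuous_on M g" using g(1) assms(4) by (rule continuous_on_subset)
  moreover have "\<forall>z \<in> M - iota ` Pk q j. g z \<in> (\<lambda>x. x j) ` range (q j)"
    using coord_extension_off_level[OF g] assms(4) by blast
  ultimately show ?thesis using g(2) by blast
qed

end
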